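(* Let $p>5$ be a prime, $q=p^h$, and let $\mathcal{F}$ be the projective closure of $ax^n+by^m=1$ over $\mathbb{F}_q$, with $a,b\in\mathbb{F}_q^*$ and $m,n$ positive integers with $n\ge m>2$. If $p\mid(n+1)$ and $p\mid(m-1)$, then $\mathcal{F}$ is $\mathbb{F}_q$-Frobenius classical with respect to conics.
   Context: With $\varphi_0,\dots,\varphi_5$ the monomials of degree 2 in $x,y,1$, $\tau$ separating and $D^{(k)}_\tau$ Hasse derivatives, the $\mathbb{F}_q$-Frobenius order sequence w.r.t. conics is the lexicographically smallest $\nu_0<\dots<\nu_4$ such that the $6\times6$ determinant with first row $(\varphi_j^q)_j$ and rows $(D^{(\nu_i)}_\tau\varphi_j)_j$ is nonzero; the curve is $\mathbb{F}_q$-Frobenius classical w.r.t. conics if $\nu_i=i$ for all $i$. *)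

theory Defs
  imports Main "Jordan_Normal_Form.Determinant"
begin

text \<open>A family D of Hasse derivatives (an iterative higher derivation) on the field 'k,
  taken with respect to the separating element t, and linear over the constant field F_q
  (the elements c with c^q = c).\<close>
definition hasse_derivation ::
  "nat \<Rightarrow> (nat \<Rightarrow> 'k::field \<Rightarrow> 'k) \<Rightarrow> 'k \<Rightarrow> bool" where
  "hasse_derivation q D t \<longleftrightarrow>
     (\<forall>f. D 0 f = f) \<and>
     (\<forall>k f g. D k (f + g) = D k f + D k g) \<and>
     (\<forall>k f g. D k (f * g) = (\<Sum>i\<le>k. D i f * D (k - i) g)) \<and>
     (\<forall>i j f. D i (D j f) = of_nat ((i + j) choose i) * D (i + j) f) \<and>
     (\<forall>k c. 1 \<le> k \<and> c ^ q = c \<longrightarrow> D k c = 0) \<and>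
     D 1 t = 1 \<and> (\<forall>k. 2 \<le> k \<longrightarrow> D k t = 0)"

definition conic_monomials :: "'k::field \<Rightarrow> 'k \<Rightarrow> 'k list" where
  "conic_monomials x y = [1, x, y, x^2, x * y, y^2]"

definition frob_conic_matrix ::
  "nat \<Rightarrow> (nat \<Rightarrow> 'k::field \<Rightarrow> 'k) \<Rightarrow> 'k \<Rightarrow> 'k \<Rightarrow> nat list \<Rightarrow> 'k mat" where
  "frob_conic_matrix q D x y \<nu> =
     mat 6 6 (\<lambda>(i, j). if i = 0 then (conic_monomials x y ! j) ^ q
                       else D (\<nu> ! (i - 1)) (conic_monomials x y ! j))"

definition admissible_conic_seq :: "nat \<Rightarrow> (nat \<Rightarrow> 'k::field \<Rightarrow> 'k) \<Rightarrow> 'k \<Rightarrow> 'k \<Rightarrow> nat list \<Rightarrow> bool" where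
  "admissible_conic_seq q D x y \<nu> \<longleftrightarrow>
     length \<nu> = 5 \<and> sorted_wrt (<) \<nu> \<and> det (frob_conic_matrix q D x y \<nu>) \<noteq> 0"

definition lex_le :: "nat list \<Rightarrow> nat list \<Rightarrow> bool" where
  "lex_le u v \<longleftrightarrow> u = v \<or> (u, v) \<in> lexord {(a, b). a < b}"

definition frob_conic_order_seq :: "nat \<Rightarrow> (nat \<Rightarrow> 'k::field \<Rightarrow> 'k) \<Rightarrow> 'k \<Rightarrow> 'k \<Rightarrow> nat list \<Rightarrow> bool" where
  "frob_conic_order_seq q D x y \<nu> \<longleftrightarrow>
     admissible_conic_seq q D x y \<nu> \<and>
     (\<forall>\<mu>. admissible_conic_seq q D x y \<mu> \<longrightarrow> lex_le \<nu> \<mu>)"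

definition frobenius_classical_conics :: "nat \<Rightarrow> (nat \<Rightarrow> 'k::field \<Rightarrow> 'k) \<Rightarrow> 'k \<Rightarrow> 'k \<Rightarrow> bool" where
  "frobenius_classical_conics q D x y \<longleftrightarrow> frob_conic_order_seq q D x y [0, 1, 2, 3, 4]"

end

theory Submission
  imports Defs "HOL-Computational_Algebra.Polynomial" "HOL-Computational_Algebra.Primes"
begin

(*
  Since p divides n + 1 and m - 1, the elements x^(n+1) and y^(m-1) are p-th powers and hence
  constants for the derivation D_1. Multiplying the curve equation by x shows that the generic point
  lies on the hyperbola x y = c0 x + c1 whose coefficients c0 = 1/(b y^(m-1)) and c1 = -a x^(n+1) c0
  are D_1-constants. Along such a hyperbola the Hasse derivatives of the conic monomials up to order 4
  are explicit (this needs p > 4), and they force every kernel vector of the 6x6 matrix to be a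
  multiple of the coefficient vector of the hyperbola; the Frobenius row then forces it to vanish,
  unless x^q y^q = c0 x^q + c1. That equation would make x a root of a nonzero polynomial over F_q,
  which is impossible: D_1 vanishes on F_q but D_1 x = 1, so x is transcendental over F_q.
*)

definition derivation :: "('k::field \<Rightarrow> 'k) \<Rightarrow> bool" where
  "derivation d \<longleftrightarrow> (\<forall>f g. d (f + g) = d f + d g) \<and> (\<forall>f g. d (f * g) = f * d g + d f * g)"

lemma derivation_add: "derivation d \<Longrightarrow> d (f + g) = d f + d g"
  unfolding derivation_def by blast

lemma derivation_mult: "derivation d \<Longrightarrow> d (f * g) = f * d g + d f * g"
  unfolding derivation_def by blast

lemma derivation_zero: "derivation d \<Longrightarrow> d 0 = 0"
proof -
  assume "derivation d"
  then have "d 0 + d 0 = d 0"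
    using derivation_add[of d 0 0] by simp
  then show ?thesis
    by (simp only: add_cancel_left_right)
qed

lemma derivation_one: "derivation d \<Longrightarrow> d 1 = 0"
proof -
  assume "derivation d"
  then have "d 1 + d 1 = d 1"
    using derivation_mult[of d 1 1] by simp
  then show ?thesis
    by (simp only: add_cancel_left_right)
qed

lemma derivation_uminus: "derivation d \<Longrightarrow> d (- f) = - d f"
  using derivation_add[of d f "- f"] by (simp add: derivation_zero eq_neg_iff_add_eq_0 add.commute)

lemma derivation_power: "derivation d \<Longrightarrow> d (f ^ k) = of_nat k * f ^ (k - 1) * d f"
proof (induction k)
  case (Suc k)
  have "d (f ^ Suc k) = f * d (f ^ k) + d f * f ^ k"
    using derivation_mult[OF Suc.prems] by simp
  also have "\<dots> = of_nat (Suc k) * f ^ k * d f"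
    using Suc by (cases k) (auto simp: algebra_simps)
  finally show ?case by simp
qed (simp add: derivation_one)

lemma derivation_inverse:
  assumes "derivation d" and "f \<noteq> 0"
  shows "d (inverse f) = - d f * inverse f ^ 2"
proof -
  have "f * d (inverse f) = - d f * inverse f"
    using derivation_mult[OF assms(1), of f "inverse f"] assms
    by (simp add: derivation_one eq_neg_iff_add_eq_0)
  then have "inverse f * (f * d (inverse f)) = inverse f * (- d f * inverse f)"
    by simp
  then show ?thesis
    using assms(2) by (simp add: power2_eq_square field_simps)
qed

lemma derivation_power_char_dvd:
  assumes "derivation d" and "CHAR('k) dvd k"
  shows "d ((f::'k::field) ^ k) = 0"
  using assms by (simp add: derivation_power of_nat_eq_0_iff_char_dvd)

lemma derivation_poly:
  assumes "derivation d" and "\<And>i. d (coeff g i) = 0" and "d x = 1"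
  shows "d (poly g x) = poly (pderiv g) x"
  using assms(2)
proof (induction g)
  case (pCons c g)
  have "d c = 0"
    using pCons.prems[of 0] by simp
  moreover have "d (poly g x) = poly (pderiv g) x"
    using pCons.prems[of "Suc _"] by (intro pCons.IH) simp
  ultimately show ?case
    using assms(1,3) by (simp add: derivation_add derivation_mult pderiv_pCons algebra_simps)
qed (simp add: derivation_zero assms(1))

lemma sum_atMost_multiples:
  fixes F :: "nat \<Rightarrow> 'a::comm_monoid_add"
  assumes "0 < p" and "\<And>i. \<not> p dvd i \<Longrightarrow> F i = 0"
  shows "(\<Sum>i\<le>N. F i) = (\<Sum>j\<le>N div p. F (p * j))"
proof -
  have "(\<Sum>i\<le>N. F i) = (\<Sum>i\<in>{i. i \<le> N \<and> p dvd i}. F i)"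
    using assms(2) by (intro sum.mono_neutral_right) auto
  also have "{i. i \<le> N \<and> p dvd i} = (\<lambda>j. p * j) ` {..N div p}"
    using assms(1) by (auto simp: less_eq_div_iff_mult_less_eq mult.commute)
  also have "(\<Sum>i\<in>(\<lambda>j. p * j) ` {..N div p}. F i) = (\<Sum>j\<le>N div p. F (p * j))"
    using assms(1) by (intro sum.reindex_cong[OF _ refl refl]) (simp add: inj_on_def)
  finally show ?thesis .
qed

lemma of_nat_power_char_power:
  assumes "prime CHAR('k::field)" and "q = CHAR('k) ^ h"
  shows "(of_nat k :: 'k) ^ q = of_nat k"
proof (induction k)
  case 0
  then show ?case using assms by (simp add: prime_gt_0_nat)
next
  case (Suc k)
  then show ?case using freshmans_dream'[OF assms, of "of_nat k" 1] by (simp add: add.commute)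
qed

lemma coeff_eq_0_if_pderiv_eq_0:
  assumes "pderiv g = 0" and "\<not> CHAR('k) dvd i"
  shows "coeff (g::'k::field poly) i = 0"
proof (cases i)
  case (Suc j)
  have "of_nat (Suc j) * coeff g (Suc j) = 0"
    using assms(1) coeff_pderiv[of g j] by simp
  moreover have "of_nat (Suc j) \<noteq> (0::'k)"
    using assms(2) Suc by (simp only: of_nat_eq_0_iff_char_dvd) simp
  ultimately show ?thesis
    using Suc by simp
qed (use assms(2) in simp)

lemma degree_pderiv_less: "degree g \<noteq> 0 \<Longrightarrow> degree (pderiv g) < degree g"
proof -
  assume "degree g \<noteq> 0"
  moreover have "degree (pderiv g) \<le> degree g - 1"
    by (rule degree_le) (auto simp: coeff_pderiv coeff_eq_0)
  ultimately show ?thesis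
    by linarith
qed

definition poly_over_Fq :: "nat \<Rightarrow> 'k::field poly \<Rightarrow> bool" where
  "poly_over_Fq q g \<longleftrightarrow> (\<forall>i. coeff g i ^ q = coeff g i)"

lemma poly_over_Fq_one: "0 < q \<Longrightarrow> poly_over_Fq q 1"
  unfolding poly_over_Fq_def by (simp add: coeff_1)

lemma poly_over_Fq_monom: "0 < q \<Longrightarrow> c ^ q = c \<Longrightarrow> poly_over_Fq q (monom c k)"
  unfolding poly_over_Fq_def by (simp add: coeff_monom)

context
  fixes q h :: nat
  assumes prime_char: "prime CHAR('k::field)" and q_def: "q = CHAR('k) ^ h"
begin

lemma char_power_pos: "0 < q"
  using prime_char q_def by (simp add: prime_gt_0_nat)

lemma frobenius_diff: "((u::'k) - v) ^ q = u ^ q - v ^ q"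
  using freshmans_dream'[OF prime_char q_def, of "u - v" v] by (simp add: eq_diff_eq)

lemma poly_over_Fq_diff:
  "poly_over_Fq q f \<Longrightarrow> poly_over_Fq q g \<Longrightarrow> poly_over_Fq q ((f::'k poly) - g)"
  unfolding poly_over_Fq_def by (simp add: frobenius_diff)

lemma poly_over_Fq_mult:
  "poly_over_Fq q f \<Longrightarrow> poly_over_Fq q g \<Longrightarrow> poly_over_Fq q ((f::'k poly) * g)"
  unfolding poly_over_Fq_def coeff_mult
  by (simp add: freshmans_dream_sum'[OF prime_char q_def] power_mult_distrib)

lemma poly_over_Fq_power: "poly_over_Fq q f \<Longrightarrow> poly_over_Fq q ((f::'k poly) ^ k)"
  by (induction k) (simp_all add: poly_over_Fq_one poly_over_Fq_mult char_power_pos)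

lemma poly_over_Fq_pderiv: "poly_over_Fq q f \<Longrightarrow> poly_over_Fq q (pderiv (f::'k poly))"
  unfolding poly_over_Fq_def coeff_pderiv
  by (simp add: power_mult_distrib of_nat_power_char_power[OF prime_char q_def] del: of_nat_Suc)

lemma poly_over_Fq_pth_root:
  assumes "1 \<le> h" and "poly_over_Fq q (g::'k poly)" and "pderiv g = 0"
  obtains r where "poly_over_Fq q r" and "degree r \<le> degree g div CHAR('k)"
    and "\<And>j. coeff r j ^ CHAR('k) = coeff g (CHAR('k) * j)"
    and "\<And>z. poly g z = poly r z ^ CHAR('k)"
proof -
  define p where "p = CHAR('k)"
  define q' where "q' = p ^ (h - 1)"
  define N where "N = degree g div p"
  define r where "r = (\<Sum>j\<le>N. monom (coeff g (p * j) ^ q') j)"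
  have p_pos: "0 < p"
    using prime_char by (simp add: p_def prime_gt_0_nat)
  have q'_p: "q' * p = q"
    using assms(1) unfolding q'_def p_def q_def by (cases h) (simp_all add: power_Suc2)
  have g_Fq: "coeff g i ^ q = coeff g i" for i
    using assms(2) unfolding poly_over_Fq_def by blast
  have coeff_r: "coeff r j = coeff g (p * j) ^ q'" for j
  proof (cases "j \<le> N")
    case False
    then have "degree g < p * j"
      using p_pos by (simp add: N_def not_le div_less_iff_less_mult mult.commute)
    then show ?thesis
      using False p_pos by (simp add: r_def coeff_sum coeff_monom coeff_eq_0 q'_def)
  qed (simp add: r_def coeff_sum coeff_monom)
  have pth_power_r: "coeff r j ^ p = coeff g (p * j)" for j
    using g_Fq q'_p by (simp add: coeff_r flip: power_mult)
  show ?thesis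
  proof
    show "poly_over_Fq q r"
      unfolding poly_over_Fq_def coeff_r
      by (metis g_Fq mult.commute power_mult)
    show "degree r \<le> degree g div CHAR('k)"
      unfolding r_def N_def p_def
      by (intro degree_sum_le) (auto intro: order.trans[OF degree_monom_le])
    show "coeff r j ^ CHAR('k) = coeff g (CHAR('k) * j)" for j
      using pth_power_r by (simp add: p_def)
    show "poly g z = poly r z ^ CHAR('k)" for z
    proof -
      have "poly r z ^ p = (\<Sum>j\<le>N. (coeff g (p * j) ^ q' * z ^ j) ^ p)"
        unfolding r_def poly_sum poly_monom p_def by (rule freshmans_dream_sum[OF prime_char refl])
      also have "\<dots> = (\<Sum>j\<le>N. coeff g (p * j) * z ^ (p * j))"
        using pth_power_r by (simp add: coeff_r power_mult_distrib flip: power_mult add: mult.commute)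
      also have "\<dots> = (\<Sum>i\<le>degree g. coeff g i * z ^ i)"
        unfolding N_def using p_pos coeff_eq_0_if_pderiv_eq_0[OF assms(3)]
        by (intro sum_atMost_multiples[symmetric]) (auto simp: p_def)
      finally show ?thesis
        by (simp add: poly_altdef p_def)
    qed
  qed
qed

lemma poly_over_Fq_eq_0_if_root:
  assumes "1 \<le> h" and "derivation d" and "\<And>c::'k. c ^ q = c \<Longrightarrow> d c = 0" and "d x = 1"
  shows "poly_over_Fq q g \<Longrightarrow> poly g x = 0 \<Longrightarrow> g = 0"
proof (induction "degree g" arbitrary: g rule: less_induct)
  case less
  show ?case
  proof (cases "degree g = 0")
    case True
    then obtain c where "g = [:c:]"
      by (rule degree_eq_zeroE)
    then show ?thesis
      using less.prems(2) by simp
  next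
    case False
    have "poly (pderiv g) x = d (poly g x)"
      using less.prems(1) assms(2-4) unfolding poly_over_Fq_def
      by (intro derivation_poly[symmetric]) auto
    then have "poly (pderiv g) x = 0"
      using less.prems(2) assms(2) by (simp add: derivation_zero)
    moreover have "degree (pderiv g) < degree g"
      using False by (rule degree_pderiv_less)
    ultimately have "pderiv g = 0"
      using less.hyps poly_over_Fq_pderiv less.prems(1) by blast
    then obtain r where r_Fq: "poly_over_Fq q r" and deg_r: "degree r \<le> degree g div CHAR('k)"
      and coeff_r: "\<And>j. coeff r j ^ CHAR('k) = coeff g (CHAR('k) * j)"
      and poly_r: "\<And>z. poly g z = poly r z ^ CHAR('k)"
      using poly_over_Fq_pth_root[OF assms(1) less.prems(1)] by blast
    have "poly r x = 0"
      using poly_r[of x] less.prems(2) by simp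
    moreover have "degree g div CHAR('k) < degree g"
      using False prime_gt_1_nat[OF prime_char] by (intro div_less_dividend) simp_all
    then have "degree r < degree g"
      using deg_r by linarith
    ultimately have "r = 0"
      using less.hyps r_Fq by blast
    have "coeff g i = 0" for i
    proof (cases "CHAR('k) dvd i")
      case True
      then obtain j where "i = CHAR('k) * j" ..
      then show ?thesis
        using coeff_r[of j] \<open>r = 0\<close> prime_gt_0_nat[OF prime_char] by (simp add: power_0_left)
    qed (use \<open>pderiv g = 0\<close> coeff_eq_0_if_pderiv_eq_0 in blast)
    then show ?thesis
      by (simp add: poly_eq_iff)
  qed
qed

end

context
  fixes q :: nat and D :: "nat \<Rightarrow> 'k::field \<Rightarrow> 'k" and t :: 'k
  assumes hasse: "hasse_derivation q D t"
begin

lemma hasse_derivation_0: "D 0 f = f"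
  using hasse unfolding hasse_derivation_def by blast

lemma hasse_derivation_add: "D k (f + g) = D k f + D k g"
  using hasse unfolding hasse_derivation_def by blast

lemma hasse_derivation_mult: "D k (f * g) = (\<Sum>i\<le>k. D i f * D (k - i) g)"
  using hasse unfolding hasse_derivation_def by blast

lemma hasse_derivation_one: "1 \<le> k \<Longrightarrow> D k 1 = 0"
  using hasse unfolding hasse_derivation_def by simp

lemma hasse_derivation_separating: "D 1 t = 1" "2 \<le> k \<Longrightarrow> D k t = 0"
  using hasse unfolding hasse_derivation_def by blast+

lemma derivation_hasse_1: "derivation (D 1)"
  using hasse_derivation_add hasse_derivation_mult[of 1] hasse_derivation_0
  unfolding derivation_def by (simp add: atMost_Suc algebra_simps)

lemma hasse_derivation_1_comp: "D 1 (D k f) = of_nat (Suc k) * D (Suc k) f"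
  using hasse unfolding hasse_derivation_def by (metis One_nat_def choose_one plus_1_eq_Suc)

lemma hasse_derivation_const:
  assumes "D 1 c = 0" and "\<And>j. 0 < j \<Longrightarrow> j \<le> k \<Longrightarrow> (of_nat j :: 'k) \<noteq> 0" and "1 \<le> k"
  shows "D k c = 0"
  using assms(2,3)
proof (induction k)
  case (Suc k)
  show ?case
  proof (cases "k = 0")
    case False
    then have "D k c = 0"
      using Suc by simp
    have "of_nat (Suc k) * D (Suc k) c = D 1 (D k c)"
      by (rule hasse_derivation_1_comp[symmetric])
    also have "\<dots> = 0"
      using \<open>D k c = 0\<close> derivation_zero[OF derivation_hasse_1] by simp
    finally show ?thesis
      using Suc.prems(1)[of "Suc k"] by simp
  qed (use assms(1) in simp)
qed simp

lemma hasse_derivation_mult_const: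
  assumes "\<And>j. 1 \<le> j \<Longrightarrow> j \<le> k \<Longrightarrow> D j c = 0"
  shows "D k (c * f) = c * D k f"
proof -
  have "D k (c * f) = (\<Sum>i\<in>{0}. D i c * D (k - i) f)"
    unfolding hasse_derivation_mult using assms by (intro sum.mono_neutral_right) auto
  then show ?thesis
    by (simp add: hasse_derivation_0)
qed

lemma hasse_derivation_separating_ne_0: "t \<noteq> 0"
  using hasse_derivation_separating(1) derivation_zero[OF derivation_hasse_1] by auto

lemma hasse_derivation_inverse_separating: "D k (inverse t) = (- 1) ^ k * inverse t ^ Suc k"
proof (induction k)
  case 0
  then show ?case by (simp add: hasse_derivation_0)
next
  case (Suc k)
  have "0 = D (Suc k) (t * inverse t)"
    using hasse_derivation_separating_ne_0 by (simp add: hasse_derivation_one)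
  also have "\<dots> = (\<Sum>i\<in>{0, 1}. D i t * D (Suc k - i) (inverse t))"
    unfolding hasse_derivation_mult
    by (intro sum.mono_neutral_right) (auto simp: hasse_derivation_separating(2))
  also have "\<dots> = t * D (Suc k) (inverse t) + D k (inverse t)"
    using hasse_derivation_separating(1) by (simp add: hasse_derivation_0)
  finally have "D (Suc k) (inverse t) = - inverse t * D k (inverse t)"
    using hasse_derivation_separating_ne_0 by (simp add: field_simps eq_neg_iff_add_eq_0)
  then show ?case
    using Suc by simp
qed

end

lemma frob_conic_matrix_kernel:
  fixes D :: "nat \<Rightarrow> 'k::field \<Rightarrow> 'k"
  assumes w: "w \<in> carrier_vec 6" and ker: "frob_conic_matrix q D x y [0, 1, 2, 3, 4] *\<^sub>v w = 0\<^sub>v 6"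
  shows "w $ 0 + x ^ q * w $ 1 + y ^ q * w $ 2 + (x ^ 2) ^ q * w $ 3 + (x * y) ^ q * w $ 4
      + (y ^ 2) ^ q * w $ 5 = 0"
    and "k \<le> 4 \<Longrightarrow> D k 1 * w $ 0 + D k x * w $ 1 + D k y * w $ 2 + D k (x ^ 2) * w $ 3
      + D k (x * y) * w $ 4 + D k (y ^ 2) * w $ 5 = 0"
proof -
  let ?M = "frob_conic_matrix q D x y [0, 1, 2, 3, 4]"
  have row: "(\<Sum>j<6. ?M $$ (i, j) * w $ j) = 0" if "i < 6" for i
  proof -
    have "(?M *\<^sub>v w) $ i = 0"
      using ker that by simp
    then show ?thesis
      using w that by (simp add: frob_conic_matrix_def scalar_prod_def lessThan_atLeast0)
  qed
  have sum6: "(\<Sum>j<6::nat. F j) = F 0 + F 1 + F 2 + F 3 + F 4 + (F 5 :: 'k)" for F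
    by (simp add: eval_nat_numeral)
  show "w $ 0 + x ^ q * w $ 1 + y ^ q * w $ 2 + (x ^ 2) ^ q * w $ 3 + (x * y) ^ q * w $ 4
      + (y ^ 2) ^ q * w $ 5 = 0"
    using row[of 0] unfolding sum6 by (simp add: frob_conic_matrix_def conic_monomials_def)
  show "D k 1 * w $ 0 + D k x * w $ 1 + D k y * w $ 2 + D k (x ^ 2) * w $ 3
      + D k (x * y) * w $ 4 + D k (y ^ 2) * w $ 5 = 0" if "k \<le> 4"
  proof -
    from that have "k = 0 \<or> k = 1 \<or> k = 2 \<or> k = 3 \<or> k = 4"
      by auto
    then have "[0, 1, 2, 3, 4] ! k = k"
      by auto
    then show ?thesis
      using row[of "Suc k"] that unfolding sum6 by (simp add: frob_conic_matrix_def conic_monomials_def)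
  qed
qed

lemma lex_le_upt:
  assumes "sorted_wrt (<) \<mu>" and "\<forall>a \<in> set \<mu>. k \<le> a"
  shows "lex_le [k..<k + length \<mu>] \<mu>"
  using assms
proof (induction \<mu> arbitrary: k)
  case (Cons a \<mu>)
  show ?case
  proof (cases "a = k")
    case True
    then have "lex_le [Suc k..<Suc k + length \<mu>] \<mu>"
      using Cons by (intro Cons.IH) auto
    then show ?thesis
      using True by (auto simp: lex_le_def upt_rec)
  next
    case False
    then show ?thesis
      using Cons.prems(2) by (auto simp: lex_le_def upt_rec)
  qed
qed (simp add: lex_le_def)

lemma lex_le_admissible_conic_seq:
  assumes "admissible_conic_seq q D x y \<mu>"
  shows "lex_le [0, 1, 2, 3, 4] \<mu>"
proof -
  have "length \<mu> = 5" and "sorted_wrt (<) \<mu>"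
    using assms unfolding admissible_conic_seq_def by auto
  then show ?thesis
    using lex_le_upt[of \<mu> 0] by (simp add: upt_rec numeral_eq_Suc)
qed

locale hyperbola_branch =
  fixes q :: nat and D :: "nat \<Rightarrow> 'k::field \<Rightarrow> 'k" and x y c0 c1 :: 'k
  assumes hasse: "hasse_derivation q D x"
    and small_char: "\<And>j. 0 < j \<Longrightarrow> j \<le> 4 \<Longrightarrow> (of_nat j :: 'k) \<noteq> 0"
    and const_c0: "D 1 c0 = 0" and const_c1: "D 1 c1 = 0" and c1_ne_0: "c1 \<noteq> 0"
    and hyperbola: "x * y = c0 * x + c1"
begin

lemma hasse_const:
  assumes "1 \<le> k" and "k \<le> 4"
  shows "D k c0 = 0" and "D k c1 = 0"
  using assms small_char by (auto intro: hasse_derivation_const[OF hasse] const_c0 const_c1)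

lemma y_eq: "y = c0 + c1 * inverse x"
  using hyperbola hasse_derivation_separating_ne_0[OF hasse] by (simp add: field_simps)

lemma hasse_y:
  assumes "1 \<le> k" and "k \<le> 4"
  shows "D k y = (- 1) ^ k * c1 * inverse x ^ Suc k"
proof -
  have "D k y = D k c0 + D k (c1 * inverse x)"
    by (subst y_eq) (rule hasse_derivation_add[OF hasse])
  also have "\<dots> = c1 * D k (inverse x)"
    using assms hasse_const by (simp add: hasse_derivation_mult_const[OF hasse])
  finally show ?thesis
    by (simp add: hasse_derivation_inverse_separating[OF hasse])
qed

lemma hasse_xy:
  assumes "1 \<le> k" and "k \<le> 4"
  shows "D k (x * y) = (if k = 1 then c0 else 0)"
proof -
  have "D k (x * y) = D k (c0 * x) + D k c1"
    unfolding hyperbola by (rule hasse_derivation_add[OF hasse])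
  also have "\<dots> = c0 * D k x"
    using assms hasse_const by (simp add: hasse_derivation_mult_const[OF hasse])
  finally show ?thesis
    using assms hasse_derivation_separating[OF hasse] by (cases "k = 1") auto
qed

lemma hasse_x_squared:
  assumes "1 \<le> k" and "k \<le> 4"
  shows "D k (x ^ 2) = (if k = 1 then 2 * x else if k = 2 then 1 else 0)"
proof -
  have "D k (x ^ 2) = (\<Sum>i\<le>k. D i x * D (k - i) x)"
    by (simp add: power2_eq_square hasse_derivation_mult[OF hasse])
  moreover have "k = 1 \<or> k = 2 \<or> k = 3 \<or> k = 4"
    using assms by auto
  ultimately show ?thesis
    using hasse_derivation_separating[OF hasse]
    by (auto simp: eval_nat_numeral hasse_derivation_0[OF hasse])
qed

lemma hasse_y_squared:
  assumes "1 \<le> k" and "k \<le> 4"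
  shows "D k (y ^ 2) = (- 1) ^ k * (2 * c1 * y * inverse x ^ Suc k
    + of_nat (k - 1) * c1 ^ 2 * inverse x ^ (k + 2))"
proof -
  have "D k (y ^ 2) = (\<Sum>i\<le>k. D i y * D (k - i) y)"
    by (simp add: power2_eq_square hasse_derivation_mult[OF hasse])
  moreover have "k = 1 \<or> k = 2 \<or> k = 3 \<or> k = 4"
    using assms by auto
  ultimately show ?thesis
    by (auto simp: eval_nat_numeral hasse_derivation_0[OF hasse] hasse_y algebra_simps)
qed

lemma hasse_rows_kernel:
  assumes "\<And>k. k \<le> 4 \<Longrightarrow> D k 1 * w $ 0 + D k x * w $ 1 + D k y * w $ 2 + D k (x ^ 2) * w $ 3
      + D k (x * y) * w $ 4 + D k (y ^ 2) * w $ 5 = 0"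
  shows "w $ 0 = - c1 * w $ 4" and "w $ 1 = - c0 * w $ 4"
    and "w $ 2 = 0" and "w $ 3 = 0" and "w $ 5 = 0"
proof -
  define f where "f = inverse x"
  have f_ne_0: "f \<noteq> 0"
    using hasse_derivation_separating_ne_0[OF hasse] by (simp add: f_def)
  define R where "R k = D k 1 * w $ 0 + D k x * w $ 1 + D k y * w $ 2 + D k (x ^ 2) * w $ 3
      + D k (x * y) * w $ 4 + D k (y ^ 2) * w $ 5" for k
  have row: "R k = 0" if "k \<le> 4" for k
    unfolding R_def using assms that .
  note hasse_simps = hasse_derivation_0[OF hasse] hasse_derivation_one[OF hasse]
    hasse_derivation_separating[OF hasse] hasse_y hasse_x_squared hasse_xy hasse_y_squared
  have "R 3 = - (c1 * f ^ 4 * (w $ 2 + (2 * y + 2 * c1 * f) * w $ 5))"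
    unfolding R_def by (simp add: hasse_simps) (simp add: f_def eval_nat_numeral algebra_simps)
  then have r3: "w $ 2 + (2 * y + 2 * c1 * f) * w $ 5 = 0"
    using row[of 3] c1_ne_0 f_ne_0 by simp
  have "R 4 = c1 * f ^ 5 * (w $ 2 + (2 * y + 3 * c1 * f) * w $ 5)"
    unfolding R_def by (simp add: hasse_simps) (simp add: f_def eval_nat_numeral algebra_simps)
  then have r4: "w $ 2 + (2 * y + 3 * c1 * f) * w $ 5 = 0"
    using row[of 4] c1_ne_0 f_ne_0 by simp
  have "c1 * f * w $ 5 = (w $ 2 + (2 * y + 3 * c1 * f) * w $ 5) - (w $ 2 + (2 * y + 2 * c1 * f) * w $ 5)"
    by (simp add: algebra_simps)
  then have "c1 * f * w $ 5 = 0"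
    using r4 r3 by simp
  then show w5: "w $ 5 = 0"
    using c1_ne_0 f_ne_0 by simp
  then show w2: "w $ 2 = 0"
    using r3 by simp
  show w3: "w $ 3 = 0"
    using row[of 2] w2 w5 unfolding R_def by (simp add: hasse_simps)
  have "w $ 1 + c0 * w $ 4 = R 1"
    unfolding R_def using w2 w3 w5 hasse_derivation_separating(1)[OF hasse] by (simp add: hasse_simps)
  then show w1: "w $ 1 = - c0 * w $ 4"
    using row[of 1] by (simp add: eq_neg_iff_add_eq_0)
  have "w $ 0 + c1 * w $ 4 = R 0"
    unfolding R_def hyperbola using w1 w2 w3 w5 by (simp add: hasse_simps algebra_simps)
  then show "w $ 0 = - c1 * w $ 4"
    using row[of 0] by (simp add: eq_neg_iff_add_eq_0)
qed

lemma frob_conic_matrix_kernel_trivial: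
  assumes off: "x ^ q * y ^ q \<noteq> c0 * x ^ q + c1"
    and w: "w \<in> carrier_vec 6" and ker: "frob_conic_matrix q D x y [0, 1, 2, 3, 4] *\<^sub>v w = 0\<^sub>v 6"
  shows "w = 0\<^sub>v 6"
proof -
  note ws = hasse_rows_kernel[OF frob_conic_matrix_kernel(2)[OF w ker]]
  have "w $ 4 * (x ^ q * y ^ q - c0 * x ^ q - c1) = 0"
    using frob_conic_matrix_kernel(1)[OF w ker] ws by (simp add: power_mult_distrib algebra_simps)
  moreover have "x ^ q * y ^ q - c0 * x ^ q - c1 \<noteq> 0"
    using off by (simp add: diff_diff_eq)
  ultimately have "w $ 4 = 0"
    by simp
  show ?thesis
  proof (rule eq_vecI)
    show "w $ i = 0\<^sub>v 6 $ i" if "i < dim_vec (0\<^sub>v 6)" for i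
    proof -
      from that have "i = 0 \<or> i = 1 \<or> i = 2 \<or> i = 3 \<or> i = 4 \<or> i = 5"
        by auto
      then show ?thesis
        using ws \<open>w $ 4 = 0\<close> by auto
    qed
  qed (use w in simp)
qed

lemma det_frob_conic_matrix_ne_0:
  assumes "x ^ q * y ^ q \<noteq> c0 * x ^ q + c1"
  shows "det (frob_conic_matrix q D x y [0, 1, 2, 3, 4]) \<noteq> 0"
  using frob_conic_matrix_kernel_trivial[OF assms]
    det_0_iff_vec_prod_zero_field[of "frob_conic_matrix q D x y [0, 1, 2, 3, 4]" 6]
  by (auto simp: frob_conic_matrix_def)

end

lemma one_minus_monom_power_ne:
  fixes a :: "'k::field"
  assumes "a \<noteq> 0" and "1 \<le> n" and "1 \<le> m" and "1 < q"
  shows "(1 - monom a n) ^ (m + q - 1) * monom 1 (q * m) \<noteq> (monom 1 q - monom a (n + 1)) ^ m"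
proof
  define A where "A = 1 - monom a n"
  define B where "B = monom 1 q - monom a (n + 1)"
  assume "(1 - monom a n) ^ (m + q - 1) * monom 1 (q * m) = (monom 1 q - monom a (n + 1)) ^ m"
  then have eq: "A ^ (m + q - 1) * monom 1 (q * m) = B ^ m"
    unfolding A_def B_def .
  have "degree (1 + - monom a n) = n"
    using assms(1,2) by (subst degree_add_eq_right) (simp_all add: degree_monom_eq)
  then have deg_A: "degree A = n"
    by (simp add: A_def)
  then have "A \<noteq> 0"
    using assms(2) by auto
  then have "degree (A ^ (m + q - 1) * monom 1 (q * m)) = (m + q - 1) * n + q * m"
    using deg_A by (simp add: degree_mult_eq degree_power_eq degree_monom_eq)
  moreover have "degree B \<le> max q (n + 1)"
    unfolding B_def by (rule degree_diff_le) (auto intro: order.trans[OF degree_monom_le])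
  then have "degree (B ^ m) \<le> m * max q (n + 1)"
    by (metis degree_power_le mult.commute mult_le_mono1 order_trans)
  moreover have "m * max q (n + 1) < (m + q - 1) * n + q * m"
  proof (cases "n + 1 \<le> q")
    case True
    then show ?thesis
      using assms(2-4) by (simp add: max_def mult.commute)
  next
    case False
    have "m * n \<le> (m + q - 1) * n"
      using assms(4) by (intro mult_le_mono1) simp
    moreover have "m < q * m"
      using assms(3,4) by simp
    moreover have "m * max q (n + 1) = m * n + m"
      using False by (simp add: max_def)
    ultimately show ?thesis
      by linarith
  qed
  ultimately show False
    using eq by simp
qed

locale diagonal_curve =
  fixes p h q n m :: nat and a b x y :: "'k::field" and D :: "nat \<Rightarrow> 'k \<Rightarrow> 'k"
  assumes prime_p: "prime p" and p_gt_5: "p > 5" and h_pos: "h \<ge> 1" and q_def: "q = p ^ h"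
    and char: "CHAR('k) = p"
    and a_Fq: "a ^ q = a" and a_ne_0: "a \<noteq> 0" and b_Fq: "b ^ q = b" and b_ne_0: "b \<noteq> 0"
    and m_gt_2: "m > 2" and m_le_n: "n \<ge> m"
    and curve: "a * x ^ n + b * y ^ m = 1"
    and hasse: "hasse_derivation q D x"
    and p_dvd_n: "p dvd (n + 1)" and p_dvd_m: "p dvd (m - 1)"
begin

(* A constant rather than an abbreviation: the simplifier rewrites the index 1 to Suc 0. *)
definition d :: "'k \<Rightarrow> 'k" where "d = D 1"

lemma derivation_d: "derivation d"
  unfolding d_def by (rule derivation_hasse_1[OF hasse])

lemma d_x: "d x = 1"
  unfolding d_def by (rule hasse_derivation_separating(1)[OF hasse])

lemma prime_char: "prime CHAR('k)" and q_char: "q = CHAR('k) ^ h"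
  using prime_p char q_def by simp_all

lemma q_gt_1: "1 < q"
  unfolding q_def using h_pos prime_gt_1_nat[OF prime_p] by (intro one_less_power) auto

lemma d_Fq: "c ^ q = c \<Longrightarrow> d c = 0"
  using hasse unfolding hasse_derivation_def d_def by simp

lemma d_power_p_multiple: "p dvd k \<Longrightarrow> d (f ^ k) = 0"
  using derivation_power_char_dvd[OF derivation_d] char by blast

lemma y_ne_0: "y \<noteq> 0"
proof
  assume "y = 0"
  then have "a * x ^ n = 1"
    using curve m_gt_2 by (simp add: power_0_left)
  have "a * (of_nat n * x ^ (n - 1)) = d (a * x ^ n)"
    using d_Fq[OF a_Fq] d_x
    by (simp add: derivation_mult[OF derivation_d] derivation_power[OF derivation_d])
  also have "\<dots> = 0"
    using \<open>a * x ^ n = 1\<close> derivation_one[OF derivation_d] by simp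
  finally have "a * (of_nat n * x ^ (n - 1)) = 0" .
  moreover have "\<not> p dvd n"
  proof
    assume "p dvd n"
    with p_dvd_n have "p dvd 1"
      by (metis dvd_add_right_iff)
    then show False
      using prime_p by simp
  qed
  then have "(of_nat n :: 'k) \<noteq> 0"
    using char by (simp add: of_nat_eq_0_iff_char_dvd)
  ultimately show False
    using a_ne_0 hasse_derivation_separating_ne_0[OF hasse] by simp
qed

definition c0 :: 'k where "c0 = inverse (b * y ^ (m - 1))"
definition c1 :: 'k where "c1 = - a * x ^ (n + 1) * c0"

lemma b_y_power_m: "b * y ^ m = 1 - a * x ^ n"
  using curve by (simp add: eq_diff_eq add.commute)

lemma hyperbola: "x * y = c0 * x + c1"
proof -
  have "b * y ^ (m - 1) * (x * y) = x * (b * y ^ m)"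
    using m_gt_2 by (simp add: algebra_simps power_Suc2 flip: power_Suc)
  also have "\<dots> = x - a * x ^ (n + 1)"
    unfolding b_y_power_m by (simp add: algebra_simps)
  finally show ?thesis
    using b_ne_0 y_ne_0 by (simp add: c0_def c1_def field_simps)
qed

lemma d_c0: "d c0 = 0"
proof -
  have "d (b * y ^ (m - 1)) = 0"
    using d_power_p_multiple[OF p_dvd_m] d_Fq[OF b_Fq]
    by (simp add: derivation_mult[OF derivation_d])
  then show ?thesis
    unfolding c0_def using derivation_inverse[OF derivation_d, of "b * y ^ (m - 1)"] b_ne_0 y_ne_0
    by simp
qed

lemma d_c1: "d c1 = 0"
  unfolding c1_def using d_c0 d_power_p_multiple[OF p_dvd_n] d_Fq[OF a_Fq]
  by (simp add: derivation_mult[OF derivation_d] derivation_uminus[OF derivation_d])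

lemma c1_ne_0: "c1 \<noteq> 0"
  unfolding c1_def c0_def using a_ne_0 b_ne_0 y_ne_0 hasse_derivation_separating_ne_0[OF hasse] by simp

lemma b_power_q_minus_1: "b ^ (q - 1) = 1"
proof -
  have "b ^ (q - 1) * b = b"
    using b_Fq q_gt_1 by (simp flip: power_Suc2)
  then show ?thesis
    using b_ne_0 by simp
qed

lemma frobenius_relation:
  assumes "x ^ q * y ^ q = c0 * x ^ q + c1"
  shows "(1 - a * x ^ n) ^ (m + q - 1) * x ^ (q * m) = (x ^ q - a * x ^ (n + 1)) ^ m"
proof -
  define v where "v = y ^ (m - 1)"
  have c0_bv: "c0 * (b * v) = 1"
    using b_ne_0 y_ne_0 by (simp add: c0_def v_def field_simps)
  have "b * v * (y ^ q * x ^ q) = (c0 * x ^ q + c1) * (b * v)"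
    using assms by (simp add: mult_ac)
  also have "\<dots> = x ^ q * (c0 * (b * v)) - a * x ^ (n + 1) * (c0 * (b * v))"
    by (simp add: c1_def algebra_simps)
  also have "\<dots> = x ^ q - a * x ^ (n + 1)"
    using c0_bv by simp
  finally have key: "b * v * (y ^ q * x ^ q) = x ^ q - a * x ^ (n + 1)" .
  have "(x ^ q - a * x ^ (n + 1)) ^ m = (b * v * (y ^ q * x ^ q)) ^ m"
    by (simp only: key)
  also have "\<dots> = b ^ m * (v * y ^ q) ^ m * (x ^ q) ^ m"
    by (simp add: power_mult_distrib mult_ac)
  also have "v * y ^ q = y ^ (m + q - 1)"
    using m_gt_2 by (simp add: v_def flip: power_add)
  also have "(y ^ (m + q - 1)) ^ m = (y ^ m) ^ (m + q - 1)"
    by (simp flip: power_mult add: mult.commute)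
  also have "b ^ m = b ^ (m + (q - 1))"
    using b_power_q_minus_1 by (simp add: power_add)
  also have "m + (q - 1) = m + q - 1"
    using q_gt_1 by simp
  also have "b ^ (m + q - 1) * (y ^ m) ^ (m + q - 1) * (x ^ q) ^ m
      = (b * y ^ m) ^ (m + q - 1) * x ^ (q * m)"
    by (simp add: power_mult_distrib power_mult)
  also have "\<dots> = (1 - a * x ^ n) ^ (m + q - 1) * x ^ (q * m)"
    by (simp only: b_y_power_m)
  finally show ?thesis ..
qed

lemma frobenius_off_hyperbola: "x ^ q * y ^ q \<noteq> c0 * x ^ q + c1"
proof
  assume "x ^ q * y ^ q = c0 * x ^ q + c1"
  define P where "P = (1 - monom a n) ^ (m + q - 1) * monom 1 (q * m) - (monom 1 q - monom a (n + 1)) ^ m"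
  have "poly P x = 0"
    using frobenius_relation[OF \<open>x ^ q * y ^ q = c0 * x ^ q + c1\<close>] by (simp add: P_def poly_monom)
  moreover have "poly_over_Fq q P"
    unfolding P_def using a_Fq char_power_pos[OF prime_char q_char]
    by (intro poly_over_Fq_diff[OF prime_char q_char] poly_over_Fq_mult[OF prime_char q_char]
        poly_over_Fq_power[OF prime_char q_char] poly_over_Fq_one poly_over_Fq_monom) auto
  ultimately have "P = 0"
    using poly_over_Fq_eq_0_if_root[OF prime_char q_char h_pos derivation_d d_Fq d_x] by blast
  then show False
    using one_minus_monom_power_ne[OF a_ne_0 _ _ q_gt_1, of n m] m_gt_2 m_le_n by (simp add: P_def)
qed

lemma hyperbola_branch: "hyperbola_branch q D x y c0 c1"
proof
  show "(of_nat j :: 'k) \<noteq> 0" if "0 < j" and "j \<le> 4" for j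
    using that p_gt_5 char by (auto simp: of_nat_eq_0_iff_char_dvd dest: dvd_imp_le)
qed (use hasse d_c0 d_c1 c1_ne_0 hyperbola in \<open>simp_all add: d_def\<close>)

end

theorem proposition3p14:
  fixes p h q n m :: nat
    and a b x y :: "'k::field"
    and D :: "nat \<Rightarrow> 'k \<Rightarrow> 'k"
  assumes "prime p" and "p > 5" and "h \<ge> 1" and "q = p ^ h"
    and "CHAR('k) = p"
    and "a ^ q = a" and "a \<noteq> 0" and "b ^ q = b" and "b \<noteq> 0"
    and "m > 2" and "n \<ge> m"
    and "a * x ^ n + b * y ^ m = 1"
    and "hasse_derivation q D x"
    and "p dvd (n + 1)" and "p dvd (m - 1)"
  shows "frobenius_classical_conics q D x y"
proof -
  interpret diagonal_curve p h q n m a b x y D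
    using assms by unfold_locales
  interpret hyperbola_branch q D x y c0 c1
    by (rule hyperbola_branch)
  have "det (frob_conic_matrix q D x y [0, 1, 2, 3, 4]) \<noteq> 0"
    using det_frob_conic_matrix_ne_0 frobenius_off_hyperbola by blast
  then have "admissible_conic_seq q D x y [0, 1, 2, 3, 4]"
    by (simp add: admissible_conic_seq_def)
  then show ?thesis
    unfolding frobenius_classical_conics_def frob_conic_order_seq_def
    using lex_le_admissible_conic_seq by blast
qed

end
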